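(* Let $\theta$ and $\rho$ be regular infinite cardinals with $\theta < \rho < \kappa$, and let $J$ be a $\kappa$-complete ideal on $\kappa$ with $NS_\kappa|E^\kappa_\theta \subseteq J$. Suppose that there is no descending $(J, I_\kappa)$-tower of length $\mathfrak{b}_\kappa$. Let $A \in J^+ \cap P(E^\kappa_\theta \cap acc(E^\kappa_{\geq\rho}))$, and let $c_\alpha \subseteq E^\kappa_{\geq\rho}\cap\alpha$ for $\alpha \in A$ be such that $\sup c_\alpha = \alpha$ and $\mathrm{o.t.}(c_\alpha) = \theta$ for every $\alpha \in A$, and $\{\alpha \in A : c_\alpha \subseteq C\} \in J^+$ for every closed unbounded $C \subseteq \kappa$. Then there is $B \in J^+ \cap P(A)$ such that $\{\alpha \in A : \exists\beta < \alpha\,(c_\alpha \setminus \beta \subseteq C)\} \in (J|B)^*$ for every closed unbounded $C \subseteq \kappa$.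
   Context: $\kappa$ is a regular uncountable cardinal. An ideal on $\kappa$ is a nonempty $J \subseteq P(\kappa)$ with $\kappa \notin J$, every bounded subset of $\kappa$ in $J$, $J$ closed under subsets and under unions of two members; $J^+ = P(\kappa)\setminus J$; for $B \in J^+$, $J|B = \{X \subseteq \kappa : X \cap B \in J\}$ and $(J|B)^* = \{X \subseteq\kappa : \kappa\setminus X \in J|B\}$; $\kappa$-complete means closed under unions of fewer than $\kappa$ members. $I_\kappa$ is the ideal of bounded subsets of $\kappa$. $acc(X) = \{\alpha \in \kappa\setminus\{0\} : \sup(X\cap\alpha)=\alpha\}$; $E^\kappa_\theta = \{\alpha \in acc(\kappa) : \mathrm{cf}(\alpha)=\theta\}$; $E^\kappa_{\geq\rho} = \{\alpha \in acc(\kappa) : \mathrm{cf}(\alpha)\geq\rho\}$; $NS_\kappa|E^\kappa_\theta = \{X : X\cap E^\kappa_\theta \text{ nonstationary}\}$. $\mathfrak{b}_\kappa$ is the least cardinality of an $F \subseteq {}^\kappa\kappa$ with no $g \in {}^\kappa\kappa$ such that $|\{\alpha : f(\alpha) \ge g(\alpha)\}| < \kappa$ for all $f \in F$. For $Y \subseteq P(\kappa)$, a descending $(J,Y)$-tower of length $\delta$ is $\langle A_\alpha : \alpha<\delta\rangle$ with each $A_\alpha \in J^+$ such that for $\alpha<\beta<\delta$: $A_\beta\setminus A_\alpha \in Y$ and $A_\alpha\setminus A_\beta \in J^+$. *)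

theory Defs
  imports Main "HOL-Library.Equipollence" "HOL-Library.Countable_Set"
begin

text \<open>Convention: the regular uncountable cardinal kappa is represented by a type 'a of
class wellorder whose universe has order type kappa; ordinals below kappa are the
elements of 'a, and subsets of kappa are values of type 'a set.\<close>

definition kappa_regular_uncountable :: "'a::wellorder itself \<Rightarrow> bool" where
  "kappa_regular_uncountable _ \<longleftrightarrow>
     \<not> countable (UNIV :: 'a set) \<and>
     (\<forall>\<gamma>::'a. \<not> ({..<\<gamma>} \<approx> (UNIV :: 'a set))) \<and>
     (\<forall>X :: 'a set. (\<forall>\<beta>. \<exists>x\<in>X. \<beta> \<le> x) \<longrightarrow>
        (\<exists>f :: 'a \<Rightarrow> 'a. bij_betw f UNIV X \<and> strict_mono f))"

definition otp :: "'a::wellorder set \<Rightarrow> 'a \<Rightarrow> bool" where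
  "otp X \<gamma> \<longleftrightarrow> (\<exists>f. bij_betw f {..<\<gamma>} X \<and> strict_mono_on {..<\<gamma>} f)"

definition cof :: "'a::wellorder \<Rightarrow> 'a" where
  "cof \<alpha> = (LEAST \<gamma>. \<exists>X. X \<subseteq> {..<\<alpha>} \<and> (\<forall>\<beta><\<alpha>. \<exists>x\<in>X. \<beta> \<le> x) \<and> otp X \<gamma>)"

definition is_cardinal :: "'a::wellorder \<Rightarrow> bool" where
  "is_cardinal \<gamma> \<longleftrightarrow> (\<forall>\<delta><\<gamma>. \<not> ({..<\<delta>} \<approx> {..<\<gamma>}))"

definition regular_infinite_cardinal :: "'a::wellorder \<Rightarrow> bool" where
  "regular_infinite_cardinal \<gamma> \<longleftrightarrow> is_cardinal \<gamma> \<and> infinite {..<\<gamma>} \<and> cof \<gamma> = \<gamma>"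

definition acc :: "'a::wellorder set \<Rightarrow> 'a set" where
  "acc X = {\<alpha>. (\<exists>\<beta>. \<beta> < \<alpha>) \<and> (\<forall>\<beta><\<alpha>. \<exists>x\<in>X. \<beta> < x \<and> x < \<alpha>)}"

definition E_cof :: "'a::wellorder \<Rightarrow> 'a set" where
  "E_cof \<theta> = {\<alpha> \<in> acc UNIV. cof \<alpha> = \<theta>}"

definition E_cof_ge :: "'a::wellorder \<Rightarrow> 'a set" where
  "E_cof_ge \<rho> = {\<alpha> \<in> acc UNIV. \<rho> \<le> cof \<alpha>}"

definition bounded_set :: "'a::wellorder set \<Rightarrow> bool" where
  "bounded_set X \<longleftrightarrow> (\<exists>\<beta>. X \<subseteq> {..<\<beta>})"

definition bounded_ideal :: "'a::wellorder set set" where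
  "bounded_ideal = {X. bounded_set X}"

definition club :: "'a::wellorder set \<Rightarrow> bool" where
  "club C \<longleftrightarrow> (\<forall>\<beta>. \<exists>x\<in>C. \<beta> \<le> x) \<and> acc C \<subseteq> C"

definition stationary :: "'a::wellorder set \<Rightarrow> bool" where
  "stationary S \<longleftrightarrow> (\<forall>C. club C \<longrightarrow> S \<inter> C \<noteq> {})"

definition is_ideal :: "'a::wellorder set set \<Rightarrow> bool" where
  "is_ideal J \<longleftrightarrow> J \<noteq> {} \<and> UNIV \<notin> J \<and> (\<forall>X. bounded_set X \<longrightarrow> X \<in> J) \<and>
     (\<forall>X\<in>J. \<forall>Y. Y \<subseteq> X \<longrightarrow> Y \<in> J) \<and> (\<forall>X\<in>J. \<forall>Y\<in>J. X \<union> Y \<in> J)"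

definition kappa_complete :: "'a::wellorder set set \<Rightarrow> bool" where
  "kappa_complete J \<longleftrightarrow> (\<forall>F. F \<subseteq> J \<and> F \<prec> (UNIV :: 'a set) \<longrightarrow> \<Union>F \<in> J)"

definition restr_ideal :: "'a set set \<Rightarrow> 'a set \<Rightarrow> 'a set set" where
  "restr_ideal J B = {X. X \<inter> B \<in> J}"

definition dual_filter :: "'a set set \<Rightarrow> 'a set set" where
  "dual_filter I = {X. UNIV - X \<in> I}"

definition unbounded_family :: "('a::wellorder \<Rightarrow> 'a) set \<Rightarrow> bool" where
  "unbounded_family F \<longleftrightarrow>
     \<not> (\<exists>g::'a \<Rightarrow> 'a. \<forall>f\<in>F. {\<alpha>. f \<alpha> \<ge> g \<alpha>} \<prec> (UNIV :: 'a set))"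

text \<open>A well-order w has order type b_kappa: it is an initial ordinal (cardinal well-order)
whose field has cardinality b_kappa, the least size of an unbounded family.\<close>
definition has_length_b_kappa :: "'i rel \<Rightarrow> 'a::wellorder itself \<Rightarrow> bool" where
  "has_length_b_kappa w _ \<longleftrightarrow> Card_order w \<and>
     (\<exists>F :: ('a \<Rightarrow> 'a) set. unbounded_family F \<and> Field w \<approx> F) \<and>
     (\<forall>F :: ('a \<Rightarrow> 'a) set. unbounded_family F \<longrightarrow> Field w \<lesssim> F)"

definition desc_tower :: "'a set set \<Rightarrow> 'a set set \<Rightarrow> 'i rel \<Rightarrow> ('i \<Rightarrow> 'a set) \<Rightarrow> bool" where
  "desc_tower J Y w A \<longleftrightarrow> Well_order w \<and> (\<forall>i\<in>Field w. A i \<notin> J) \<and>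
     (\<forall>i j. (i, j) \<in> w \<and> i \<noteq> j \<longrightarrow> A j - A i \<in> Y \<and> A i - A j \<notin> J)"

end

(*
  Suppose no such B exists. For a club D let S(D) be the set of alpha in A whose ladder c alpha
  lies in D above some beta < alpha. By the hypothesis on the ladders S(D) is J-positive, so the
  failure of the conclusion for B = S(D) gives a club C with S(D) - S(C) J-positive.
  Clubs are represented by the closure points Cl(h) of functions h, and Cl(h) is contained in D
  up to a bounded set as soon as h eventually dominates the next-element function of D.
  Along the initial well-order of length b_kappa choose h_xi eventually dominating the
  next-element functions of all earlier Cl(g_eta) (fewer than b_kappa functions are bounded) and
  put g_xi = max(h_xi, next-element function of the club splitting S(Cl(h_xi))). Then the sets
  S(Cl(g_xi)) form a descending (J, I_kappa)-tower of length b_kappa, which was excluded.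
*)

theory Submission
  imports Defs
begin

unbundle cardinal_syntax

lemma bounded_set_subset: "bounded_set X \<Longrightarrow> Y \<subseteq> X \<Longrightarrow> bounded_set Y"
  unfolding bounded_set_def by blast

lemma bounded_set_Un:
  assumes "bounded_set X" "bounded_set Y"
  shows "bounded_set (X \<union> Y)"
proof -
  obtain \<beta> \<gamma> where "X \<subseteq> {..<\<beta>}" "Y \<subseteq> {..<\<gamma>}" using assms unfolding bounded_set_def by blast
  hence "X \<union> Y \<subseteq> {..<max \<beta> \<gamma>}" by (auto simp: less_max_iff_disj)
  thus ?thesis unfolding bounded_set_def by blast
qed

lemma is_ideal_subset: "is_ideal J \<Longrightarrow> X \<in> J \<Longrightarrow> Y \<subseteq> X \<Longrightarrow> Y \<in> J"
  unfolding is_ideal_def by blast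

lemma is_ideal_subset_Un_bounded:
  assumes "is_ideal J" "X \<in> J" "bounded_set Y" "Z \<subseteq> X \<union> Y"
  shows "Z \<in> J"
  using assms unfolding is_ideal_def by meson

lemma mem_dual_filter_restr_ideal: "X \<in> dual_filter (restr_ideal J B) \<longleftrightarrow> B - X \<in> J"
proof -
  have "(UNIV - X) \<inter> B = B - X" by blast
  thus ?thesis unfolding dual_filter_def restr_ideal_def by simp
qed

definition closure_points :: "('a::wellorder \<Rightarrow> 'a) \<Rightarrow> 'a set" where
  "closure_points h = {\<delta> \<in> acc UNIV. \<forall>\<gamma><\<delta>. h \<gamma> < \<delta>}"

definition next_in :: "'a::wellorder set \<Rightarrow> 'a \<Rightarrow> 'a" where
  "next_in D \<gamma> = (LEAST x. x \<in> D \<and> \<gamma> < x)"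

lemma closure_points_antimono: "(\<And>\<gamma>. h \<gamma> \<le> g \<gamma>) \<Longrightarrow> closure_points g \<subseteq> closure_points h"
  unfolding closure_points_def by (auto intro: le_less_trans)

lemma acc_closure_points_subset: "acc (closure_points h) \<subseteq> closure_points h"
proof
  fix \<delta> assume \<delta>: "\<delta> \<in> acc (closure_points h)"
  show "\<delta> \<in> closure_points h" unfolding closure_points_def acc_def
  proof (intro CollectI conjI allI impI)
    show "\<exists>\<beta>. \<beta> < \<delta>" using \<delta> unfolding acc_def by blast
    fix \<gamma> assume "\<gamma> < \<delta>"
    then obtain x where x: "x \<in> closure_points h" "\<gamma> < x" "x < \<delta>"
      using \<delta> unfolding acc_def by blast
    thus "\<exists>x\<in>UNIV. \<gamma> < x \<and> x < \<delta>" by blast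
    have "h \<gamma> < x" using x unfolding closure_points_def by blast
    thus "h \<gamma> < \<delta>" using x by (meson order_less_trans)
  qed
qed

lemma strict_chain_has_limit:
  fixes b :: "nat \<Rightarrow> 'a::wellorder"
  assumes inc: "\<And>n. b n < b (Suc n)" and bounded: "\<And>n. b n < \<mu>"
  shows "\<exists>\<delta>. (\<forall>n. b n < \<delta>) \<and> (\<forall>\<gamma><\<delta>. \<exists>n. \<gamma> < b n)"
proof -
  define \<delta> where "\<delta> = (LEAST \<delta>. \<forall>n. b n < \<delta>)"
  have above: "\<forall>n. b n < \<delta>" unfolding \<delta>_def by (rule LeastI[of _ \<mu>]) (use bounded in auto)
  have "\<exists>n. \<gamma> < b n" if "\<gamma> < \<delta>" for \<gamma>
  proof (rule ccontr)
    assume "\<nexists>n. \<gamma> < b n"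
    hence "\<forall>n. b n < \<gamma>" using inc by (meson not_less order_less_le_trans)
    hence "\<delta> \<le> \<gamma>" unfolding \<delta>_def by (rule Least_le)
    thus False using that by simp
  qed
  thus ?thesis using above by blast
qed

definition tails_in :: "'a::wellorder set \<Rightarrow> ('a \<Rightarrow> 'a set) \<Rightarrow> 'a set \<Rightarrow> 'a set" where
  "tails_in A c D = {\<alpha>\<in>A. \<exists>\<beta><\<alpha>. c \<alpha> - {..<\<beta>} \<subseteq> D}"

lemma tails_in_superset: "A \<subseteq> acc UNIV \<Longrightarrow> {\<alpha>\<in>A. c \<alpha> \<subseteq> D} \<subseteq> tails_in A c D"
  unfolding tails_in_def acc_def by blast

definition eventually_less :: "('a::wellorder \<Rightarrow> 'a) \<Rightarrow> ('a \<Rightarrow> 'a) \<Rightarrow> bool" where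
  "eventually_less f g \<longleftrightarrow> {\<alpha>. g \<alpha> \<le> f \<alpha>} \<prec> (UNIV :: 'a set)"

lemma dominating_recursion:
  fixes w :: "'i rel" and F :: "'b \<Rightarrow> 'a::wellorder \<Rightarrow> 'a" and step :: "('a \<Rightarrow> 'a) \<Rightarrow> 'b"
  assumes w: "Well_order w"
    and small: "\<forall>\<xi>\<in>Field w. \<forall>G :: ('a \<Rightarrow> 'a) set. G \<lesssim> underS w \<xi> \<longrightarrow> \<not> unbounded_family G"
  shows "\<exists>g. \<forall>\<xi>\<in>Field w. \<exists>h. g \<xi> = step h \<and>
           (\<forall>\<eta>. (\<eta>, \<xi>) \<in> w \<and> \<eta> \<noteq> \<xi> \<longrightarrow> eventually_less (F (g \<eta>)) h)"
proof -
  define bound where "bound G = (SOME h. \<forall>f\<in>G. eventually_less f h)" for G :: "('a \<Rightarrow> 'a) set"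
  define g where "g = wfrec (w - Id) (\<lambda>g' \<xi>. step (bound ((\<lambda>\<eta>. F (g' \<eta>)) ` underS w \<xi>)))"
  have wf: "wf (w - Id)" using w wo_rel.WF unfolding wo_rel_def by blast
  have "\<exists>h. g \<xi> = step h \<and> (\<forall>\<eta>. (\<eta>, \<xi>) \<in> w \<and> \<eta> \<noteq> \<xi> \<longrightarrow> eventually_less (F (g \<eta>)) h)"
    if \<xi>: "\<xi> \<in> Field w" for \<xi>
  proof (intro exI conjI allI impI)
    let ?G = "(\<lambda>\<eta>. F (g \<eta>)) ` underS w \<xi>"
    have "g \<xi> = step (bound ((\<lambda>\<eta>. F (cut g (w - Id) \<xi> \<eta>)) ` underS w \<xi>))"
      unfolding g_def by (rule wfrec[OF wf])
    also have "(\<lambda>\<eta>. F (cut g (w - Id) \<xi> \<eta>)) ` underS w \<xi> = ?G"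
      by (rule image_cong) (auto simp: cut_apply underS_def)
    finally show "g \<xi> = step (bound ?G)" .
    have "?G \<lesssim> underS w \<xi>" by (rule image_lepoll)
    hence "\<not> unbounded_family ?G" using small \<xi> by blast
    hence "\<exists>h. \<forall>f\<in>?G. eventually_less f h"
      unfolding unbounded_family_def eventually_less_def by blast
    hence bound: "\<forall>f\<in>?G. eventually_less f (bound ?G)"
      unfolding bound_def by (rule someI_ex)
    fix \<eta> assume "(\<eta>, \<xi>) \<in> w \<and> \<eta> \<noteq> \<xi>"
    hence "\<eta> \<in> underS w \<xi>" unfolding underS_def by blast
    thus "eventually_less (F (g \<eta>)) (bound ?G)" using bound by blast
  qed
  thus ?thesis by metis
qed

lemma unbounded_family_UNIV: "unbounded_family (UNIV :: ('a::wellorder \<Rightarrow> 'a) set)"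
  unfolding unbounded_family_def
proof
  assume "\<exists>g::'a \<Rightarrow> 'a. \<forall>f\<in>UNIV. {\<alpha>. g \<alpha> \<le> f \<alpha>} \<prec> (UNIV :: 'a set)"
  then obtain g :: "'a \<Rightarrow> 'a" where "{\<alpha>. g \<alpha> \<le> g \<alpha>} \<prec> (UNIV :: 'a set)" by blast
  thus False unfolding lesspoll_def by (simp add: eqpoll_refl)
qed

lemma has_length_b_kappa_exists:
  obtains w :: "('a::wellorder \<Rightarrow> 'a) rel"
  where "has_length_b_kappa w TYPE('a)" "Well_order w"
    "\<forall>\<xi>\<in>Field w. \<forall>G :: ('a \<Rightarrow> 'a) set. G \<lesssim> underS w \<xi> \<longrightarrow> \<not> unbounded_family G"
proof -
  define R where "R = {|F| | F :: ('a \<Rightarrow> 'a) set. unbounded_family F}"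
  have "R \<noteq> {}" unfolding R_def using unbounded_family_UNIV by blast
  moreover have "\<forall>r\<in>R. Card_order r" unfolding R_def using card_of_Card_order by blast
  ultimately obtain r where r: "r \<in> R" "\<forall>r'\<in>R. r \<le>o r'"
    using exists_minim_Card_order by blast
  then obtain F0 :: "('a \<Rightarrow> 'a) set" where F0: "r = |F0|" "unbounded_family F0"
    unfolding R_def by blast
  have F0_min: "F0 \<lesssim> F" if "unbounded_family F" for F :: "('a \<Rightarrow> 'a) set"
  proof -
    have "|F| \<in> R" unfolding R_def using that by blast
    hence "|F0| \<le>o |F|" using r(2) F0(1) by blast
    thus ?thesis unfolding lepoll_def using card_of_ordLeq by blast
  qed
  define w where "w = |F0|"
  have w_card: "Card_order w" unfolding w_def by (rule card_of_Card_order)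
  have w_field: "Field w = F0" unfolding w_def by (rule Field_card_of)
  have "has_length_b_kappa w TYPE('a)"
    unfolding has_length_b_kappa_def using w_card F0(2) F0_min eqpoll_refl unfolding w_field by blast
  moreover have "Well_order w" using w_card by (simp add: card_order_on_well_order_on)
  moreover have "\<forall>\<xi>\<in>Field w. \<forall>G :: ('a \<Rightarrow> 'a) set. G \<lesssim> underS w \<xi> \<longrightarrow> \<not> unbounded_family G"
  proof (intro ballI allI impI notI)
    fix \<xi> and G :: "('a \<Rightarrow> 'a) set"
    assume \<xi>: "\<xi> \<in> Field w" and "G \<lesssim> underS w \<xi>" and "unbounded_family G"
    hence "F0 \<lesssim> underS w \<xi>" using F0_min lepoll_trans by blast
    hence "|F0| \<le>o |underS w \<xi>|" unfolding lepoll_def using card_of_ordLeq by blast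
    moreover have "|underS w \<xi>| <o w" using card_of_underS[OF w_card \<xi>] .
    ultimately show False unfolding w_def using not_ordLess_ordLeq by blast
  qed
  ultimately show thesis using that by blast
qed

locale regular_uncountable =
  fixes \<kappa> :: "'a::wellorder itself"
  assumes regular_uncountable: "kappa_regular_uncountable \<kappa>"
begin

lemma exists_greater: "\<exists>y. (x::'a) < y"
proof (rule ccontr)
  assume "\<nexists>y. x < y"
  hence U: "UNIV = insert x {..<x}" by (auto simp: not_less_iff_gr_or_eq)
  have "infinite (UNIV::'a set)"
    using regular_uncountable countable_finite unfolding kappa_regular_uncountable_def by blast
  hence "infinite {..<x}" using U by (metis finite_insert)
  hence "{..<x} \<approx> (UNIV::'a set)" using U infinite_insert_eqpoll eqpoll_sym by metis
  thus False using regular_uncountable unfolding kappa_regular_uncountable_def by blast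
qed

lemma bounded_set_atMost: "bounded_set {..(x::'a)}"
proof -
  obtain y where "x < y" using exists_greater by blast
  thus ?thesis unfolding bounded_set_def by (intro exI[of _ y]) auto
qed

lemma lesspoll_UNIV_imp_bounded_set:
  assumes "(X::'a set) \<prec> (UNIV::'a set)"
  shows "bounded_set X"
proof (rule ccontr)
  assume "\<not> bounded_set X"
  hence "\<forall>\<beta>. \<exists>x\<in>X. \<beta> \<le> x" unfolding bounded_set_def by (meson lessThan_iff not_le subsetI)
  then obtain f :: "'a \<Rightarrow> 'a" where "bij_betw f UNIV X"
    using regular_uncountable unfolding kappa_regular_uncountable_def by blast
  hence "X \<approx> (UNIV::'a set)" using eqpoll_def eqpoll_sym by blast
  thus False using assms unfolding lesspoll_def by blast
qed

lemma lessThan_lesspoll_UNIV: "{..<(x::'a)} \<prec> (UNIV::'a set)"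
  using regular_uncountable unfolding kappa_regular_uncountable_def lesspoll_def
  by (simp add: subset_imp_lepoll)

lemma countable_lesspoll_UNIV:
  assumes "countable (X::'a set)"
  shows "X \<prec> (UNIV::'a set)"
proof -
  have "\<not> X \<approx> (UNIV::'a set)"
  proof
    assume "X \<approx> (UNIV::'a set)"
    hence "countable (UNIV::'a set)"
      using assms countable_lepoll eqpoll_sym eqpoll_imp_lepoll by metis
    thus False using regular_uncountable unfolding kappa_regular_uncountable_def by blast
  qed
  thus ?thesis unfolding lesspoll_def by (simp add: subset_imp_lepoll)
qed

lemma eventually_less_imp_le:
  assumes "eventually_less f (g :: 'a \<Rightarrow> 'a)"
  obtains \<beta> where "\<And>\<gamma>. \<beta> \<le> \<gamma> \<Longrightarrow> f \<gamma> \<le> g \<gamma>"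
proof -
  obtain \<beta> where \<beta>: "{\<alpha>. g \<alpha> \<le> f \<alpha>} \<subseteq> {..<\<beta>}"
    using assms lesspoll_UNIV_imp_bounded_set
    unfolding eventually_less_def bounded_set_def by blast
  have "f \<gamma> \<le> g \<gamma>" if "\<beta> \<le> \<gamma>" for \<gamma>
  proof (rule ccontr)
    assume "\<not> f \<gamma> \<le> g \<gamma>"
    hence "\<gamma> \<in> {\<alpha>. g \<alpha> \<le> f \<alpha>}" by simp
    hence "\<gamma> < \<beta>" using \<beta> by blast
    thus False using that by simp
  qed
  thus thesis using that by blast
qed

lemma closure_points_unbounded: "\<exists>\<delta>\<in>closure_points h. (\<beta>::'a) \<le> \<delta>"
proof -
  have "\<exists>y. x < y \<and> (\<forall>\<gamma><x. h \<gamma> < y)" for x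
  proof -
    have "h ` {..<x} \<prec> (UNIV::'a set)"
      using lesspoll_trans1[OF image_lepoll lessThan_lesspoll_UNIV] .
    then obtain \<beta> where \<beta>: "h ` {..<x} \<subseteq> {..<\<beta>}"
      using lesspoll_UNIV_imp_bounded_set unfolding bounded_set_def by blast
    obtain s where "x < s" using exists_greater by blast
    with \<beta> show ?thesis by (intro exI[of _ "max \<beta> s"]) (auto simp: less_max_iff_disj)
  qed
  then obtain nxt where nxt: "\<And>x. x < nxt x" "\<And>x \<gamma>. \<gamma> < x \<Longrightarrow> h \<gamma> < nxt x" by metis
  define b where "b n = (nxt ^^ n) \<beta>" for n
  have b_Suc: "b (Suc n) = nxt (b n)" for n unfolding b_def by simp
  have "range b \<prec> (UNIV::'a set)" by (rule countable_lesspoll_UNIV) simp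
  then obtain \<mu> where "range b \<subseteq> {..<\<mu>}"
    using lesspoll_UNIV_imp_bounded_set unfolding bounded_set_def by blast
  hence "b n < \<mu>" for n by blast
  moreover have "b n < b (Suc n)" for n using nxt(1) b_Suc by simp
  ultimately obtain \<delta> where \<delta>: "\<forall>n. b n < \<delta>" "\<forall>\<gamma><\<delta>. \<exists>n. \<gamma> < b n"
    using strict_chain_has_limit by blast
  have "\<delta> \<in> closure_points h"
    unfolding closure_points_def acc_def
  proof (intro CollectI conjI allI impI)
    show "\<exists>\<beta>. \<beta> < \<delta>" using \<delta> by blast
    fix \<gamma> assume "\<gamma> < \<delta>"
    then obtain n where n: "\<gamma> < b n" using \<delta> by blast
    thus "\<exists>x\<in>UNIV. \<gamma> < x \<and> x < \<delta>" using \<delta> by blast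
    have "h \<gamma> < b (Suc n)" using nxt(2)[OF n] b_Suc by simp
    thus "h \<gamma> < \<delta>" using \<delta> by (meson order_less_trans)
  qed
  moreover have "\<beta> \<le> \<delta>" using \<delta>(1)[rule_format, of 0] unfolding b_def by simp
  ultimately show ?thesis by blast
qed

lemma club_closure_points: "club (closure_points (h :: 'a \<Rightarrow> 'a))"
  unfolding club_def using closure_points_unbounded acc_closure_points_subset by blast

lemma next_in_club:
  assumes "club (D::'a set)"
  shows "next_in D \<gamma> \<in> D" "\<gamma> < next_in D \<gamma>"
proof -
  obtain y where y: "\<gamma> < y" using exists_greater by blast
  obtain x where x: "x \<in> D" "y \<le> x" using assms unfolding club_def by blast
  have "next_in D \<gamma> \<in> D \<and> \<gamma> < next_in D \<gamma>"
    unfolding next_in_def by (rule LeastI[of _ x]) (use x y in auto)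
  thus "next_in D \<gamma> \<in> D" "\<gamma> < next_in D \<gamma>" by auto
qed

lemma bounded_closure_points_diff:
  assumes D: "club (D::'a set)" and le: "\<And>\<gamma>. \<beta> \<le> \<gamma> \<Longrightarrow> next_in D \<gamma> \<le> h \<gamma>"
  shows "bounded_set (closure_points h - D)"
proof -
  have "\<delta> \<in> D" if \<delta>: "\<delta> \<in> closure_points h" "\<beta> < \<delta>" for \<delta>
  proof -
    have "\<delta> \<in> acc D" unfolding acc_def
    proof (intro CollectI conjI allI impI)
      show "\<exists>\<beta>. \<beta> < \<delta>" using \<delta> by blast
      fix \<gamma> assume "\<gamma> < \<delta>"
      hence "max \<gamma> \<beta> < \<delta>" using \<delta> by simp
      hence "next_in D (max \<gamma> \<beta>) < \<delta>"
        using le[of "max \<gamma> \<beta>"] \<delta>(1) unfolding closure_points_def by fastforce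
      thus "\<exists>x\<in>D. \<gamma> < x \<and> x < \<delta>"
        using next_in_club[OF D, of "max \<gamma> \<beta>"] by (metis max.strict_boundedE)
    qed
    thus ?thesis using D unfolding club_def by blast
  qed
  hence "closure_points h - D \<subseteq> {..\<beta>}" by (auto intro: leI)
  thus ?thesis using bounded_set_atMost bounded_set_subset by blast
qed

lemma bounded_tails_in_diff:
  assumes "bounded_set (D' - D)"
  shows "bounded_set (tails_in A c D' - tails_in A c (D::'a set))"
proof -
  obtain \<beta>0 where \<beta>0: "D' - D \<subseteq> {..<\<beta>0}" using assms unfolding bounded_set_def by blast
  have "\<alpha> \<in> tails_in A c D" if \<alpha>: "\<alpha> \<in> tails_in A c D'" "\<beta>0 < \<alpha>" for \<alpha>
  proof -
    obtain \<beta> where \<beta>: "\<alpha> \<in> A" "\<beta> < \<alpha>" "c \<alpha> - {..<\<beta>} \<subseteq> D'"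
      using \<alpha>(1) unfolding tails_in_def by blast
    have "c \<alpha> - {..<max \<beta> \<beta>0} \<subseteq> D"
    proof
      fix x assume x: "x \<in> c \<alpha> - {..<max \<beta> \<beta>0}"
      hence "x \<in> D'" using \<beta>(3) by (auto simp: less_max_iff_disj)
      moreover have "x \<notin> {..<\<beta>0}" using x by (auto simp: less_max_iff_disj)
      ultimately show "x \<in> D" using \<beta>0 by blast
    qed
    moreover have "max \<beta> \<beta>0 < \<alpha>" using \<beta>(2) \<alpha>(2) by simp
    ultimately show ?thesis using \<beta>(1) unfolding tails_in_def by blast
  qed
  hence "tails_in A c D' - tails_in A c D \<subseteq> {..\<beta>0}" by (auto intro: leI)
  thus ?thesis using bounded_set_atMost bounded_set_subset by blast
qed

lemma splitting_step:
  fixes J :: "'a set set" and S :: "'a set \<Rightarrow> 'a set"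
  assumes J: "is_ideal J"
    and S_bounded_diff: "\<And>D D'. bounded_set (D' - D) \<Longrightarrow> bounded_set (S D' - S D)"
    and D: "club D" and h: "eventually_less (next_in D) h"
    and E: "club E" "S (closure_points h) - S E \<notin> J"
    and g_ge: "\<And>\<gamma>. h \<gamma> \<le> g \<gamma>" "\<And>\<gamma>. next_in E \<gamma> \<le> g \<gamma>"
  shows "bounded_set (S (closure_points g) - S D)" "S D - S (closure_points g) \<notin> J"
proof -
  obtain \<beta> where "\<And>\<gamma>. \<beta> \<le> \<gamma> \<Longrightarrow> next_in D \<gamma> \<le> h \<gamma>"
    using h by (rule eventually_less_imp_le) blast
  hence h_D: "bounded_set (closure_points h - D)" by (rule bounded_closure_points_diff[OF D])
  hence tail_h: "bounded_set (S (closure_points h) - S D)" by (rule S_bounded_diff)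
  have "closure_points g \<subseteq> closure_points h" by (rule closure_points_antimono) (rule g_ge(1))
  hence "bounded_set (closure_points g - D)" using h_D bounded_set_subset by blast
  thus "bounded_set (S (closure_points g) - S D)" by (rule S_bounded_diff)
  have "bounded_set (closure_points g - E)"
    by (rule bounded_closure_points_diff[OF E(1)]) (rule g_ge(2))
  hence tail_E: "bounded_set (S (closure_points g) - S E)" by (rule S_bounded_diff)
  show "S D - S (closure_points g) \<notin> J"
  proof
    assume "S D - S (closure_points g) \<in> J"
    moreover have "S (closure_points h) - S E \<subseteq> (S D - S (closure_points g)) \<union>
        ((S (closure_points h) - S D) \<union> (S (closure_points g) - S E))" by blast
    ultimately have "S (closure_points h) - S E \<in> J"
      by (rule is_ideal_subset_Un_bounded[OF J _ bounded_set_Un[OF tail_h tail_E]])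
    thus False using E(2) by contradiction
  qed
qed

lemma desc_tower_from_splitting:
  fixes J :: "'a set set" and S :: "'a set \<Rightarrow> 'a set" and w :: "'i rel"
  assumes J: "is_ideal J"
    and S_pos: "\<And>D. club D \<Longrightarrow> S D \<notin> J"
    and S_bounded_diff: "\<And>D D'. bounded_set (D' - D) \<Longrightarrow> bounded_set (S D' - S D)"
    and split: "\<And>D. club D \<Longrightarrow> \<exists>C. club C \<and> S D - S C \<notin> J"
    and w: "Well_order w"
    and small: "\<forall>\<xi>\<in>Field w. \<forall>G :: ('a \<Rightarrow> 'a) set. G \<lesssim> underS w \<xi> \<longrightarrow> \<not> unbounded_family G"
  shows "\<exists>T. desc_tower J bounded_ideal w T"
proof -
  have "\<forall>D. \<exists>C. club D \<longrightarrow> club C \<and> S D - S C \<notin> J" using split by blast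
  from choice[OF this] obtain C where C: "\<forall>D. club D \<longrightarrow> club (C D) \<and> S D - S (C D) \<notin> J"
    by blast
  define step where "step h = (\<lambda>\<gamma>. max (h \<gamma>) (next_in (C (closure_points h)) \<gamma>))"
    for h :: "'a \<Rightarrow> 'a"
  obtain g where g: "\<forall>\<xi>\<in>Field w. \<exists>h. g \<xi> = step h \<and>
      (\<forall>\<eta>. (\<eta>, \<xi>) \<in> w \<and> \<eta> \<noteq> \<xi> \<longrightarrow> eventually_less (next_in (closure_points (g \<eta>))) h)"
    using dominating_recursion[where F = "\<lambda>f. next_in (closure_points f)" and step = step,
        OF w small] by blast
  define T where "T \<xi> = S (closure_points (g \<xi>))" for \<xi>
  have "desc_tower J bounded_ideal w T"
    unfolding desc_tower_def
  proof (intro conjI allI impI ballI)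
    show "Well_order w" by (rule w)
    show "T \<xi> \<notin> J" for \<xi> unfolding T_def by (rule S_pos[OF club_closure_points])
  next
    fix \<eta> \<xi> assume "(\<eta>, \<xi>) \<in> w \<and> \<eta> \<noteq> \<xi>"
    moreover from this have "\<xi> \<in> Field w" unfolding Field_def by blast
    ultimately obtain h where g\<xi>: "g \<xi> = step h"
      and h: "eventually_less (next_in (closure_points (g \<eta>))) h" using g by blast
    have E: "club (C (closure_points h))" "S (closure_points h) - S (C (closure_points h)) \<notin> J"
      using C club_closure_points[of h] by simp_all
    have g_ge: "h \<gamma> \<le> g \<xi> \<gamma>" "next_in (C (closure_points h)) \<gamma> \<le> g \<xi> \<gamma>" for \<gamma>
      by (simp_all add: g\<xi> step_def)
    note splitting = splitting_step[OF J S_bounded_diff club_closure_points h E g_ge]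
    show "T \<xi> - T \<eta> \<in> bounded_ideal"
      using splitting(1) unfolding T_def bounded_ideal_def by simp
    show "T \<eta> - T \<xi> \<notin> J"
      using splitting(2) unfolding T_def .
  qed
  thus ?thesis by blast
qed

end

theorem proposition5p4:
  fixes J :: "'a::wellorder set set"
    and \<theta> \<rho> :: 'a
    and A :: "'a set"
    and c :: "'a \<Rightarrow> 'a set"
  assumes kappa: "kappa_regular_uncountable TYPE('a)"
    and theta: "regular_infinite_cardinal \<theta>"
    and rho: "regular_infinite_cardinal \<rho>"
    and theta_rho: "\<theta> < \<rho>"
    and J_ideal: "is_ideal J"
    and J_complete: "kappa_complete J"
    and NS: "\<forall>X. \<not> stationary (X \<inter> E_cof \<theta>) \<longrightarrow> X \<in> J"
    and no_tower: "\<not> (\<exists>(w :: ('a \<Rightarrow> 'a) rel) (T :: ('a \<Rightarrow> 'a) \<Rightarrow> 'a set).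
                       has_length_b_kappa w TYPE('a) \<and> desc_tower J bounded_ideal w T)"
    and A_pos: "A \<notin> J"
    and A_sub: "A \<subseteq> E_cof \<theta> \<inter> acc (E_cof_ge \<rho>)"
    and c_sub: "\<forall>\<alpha>\<in>A. c \<alpha> \<subseteq> E_cof_ge \<rho> \<inter> {..<\<alpha>}"
    and c_sup: "\<forall>\<alpha>\<in>A. \<forall>\<beta><\<alpha>. \<exists>x\<in>c \<alpha>. \<beta> < x"
    and c_otp: "\<forall>\<alpha>\<in>A. otp (c \<alpha>) \<theta>"
    and c_club: "\<forall>C. club C \<longrightarrow> {\<alpha>\<in>A. c \<alpha> \<subseteq> C} \<notin> J"
  shows "\<exists>B. B \<notin> J \<and> B \<subseteq> A \<and>
           (\<forall>C. club C \<longrightarrow>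
              {\<alpha>\<in>A. \<exists>\<beta><\<alpha>. c \<alpha> - {..<\<beta>} \<subseteq> C} \<in> dual_filter (restr_ideal J B))"
proof (rule ccontr)
  assume no_B: "\<not> ?thesis"
  interpret regular_uncountable "TYPE('a)" by unfold_locales (rule kappa)
  have pos: "tails_in A c D \<notin> J" if "club D" for D
  proof
    assume "tails_in A c D \<in> J"
    moreover have "A \<subseteq> acc UNIV" using A_sub unfolding E_cof_def by blast
    ultimately have "{\<alpha>\<in>A. c \<alpha> \<subseteq> D} \<in> J"
      using is_ideal_subset[OF J_ideal] tails_in_superset by blast
    thus False using c_club that by blast
  qed
  have split: "\<exists>C. club C \<and> tails_in A c D - tails_in A c C \<notin> J" if D: "club D" for D
  proof -
    have "tails_in A c D \<subseteq> A" unfolding tails_in_def by blast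
    then obtain C where "club C" "tails_in A c C \<notin> dual_filter (restr_ideal J (tails_in A c D))"
      using no_B[folded tails_in_def] pos[OF D] by blast
    thus ?thesis by (auto simp: mem_dual_filter_restr_ideal)
  qed
  obtain w :: "('a \<Rightarrow> 'a) rel" where w: "has_length_b_kappa w TYPE('a)" "Well_order w"
    "\<forall>\<xi>\<in>Field w. \<forall>G :: ('a \<Rightarrow> 'a) set. G \<lesssim> underS w \<xi> \<longrightarrow> \<not> unbounded_family G"
    by (rule has_length_b_kappa_exists)
  have "\<exists>T. desc_tower J bounded_ideal w T"
    by (rule desc_tower_from_splitting[OF J_ideal pos bounded_tails_in_diff split w(2,3)])
  thus False using no_tower w(1) by blast
qed

end
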